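(* Let $V$ be a complex vector space of dimension $N$, $\underline v=(v_1,\dots,v_N)$ a basis of $V$, $\underline a\in\mathbb R^N$, $\|\cdot\|$ a Hermitian norm on $V$ admitting $\underline v$ as an orthogonal basis, and $\|\cdot\|'$ an arbitrary norm on $V$. Then for every $p\in[1,\infty]$, $$d_p\big(\iota_{\underline v}(\|\cdot\|,\underline a),\iota^1_{\underline v}(\|\cdot\|',\underline a)\big)\le d_\infty(\|\cdot\|,\|\cdot\|')+\log N.$$
   Context: For two norms $\|\cdot\|,\|\cdot\|'$ on $V$ ($\dim V=N$), the successive minima are $\lambda_i(\|\cdot\|,\|\cdot\|')=\sup_{W\in\mathrm{Grass}_i(V)}\inf_{w\in W\setminus\{0\}}\log(\|w\|'/\|w\|)$, $i=1,\dots,N$; for $p\in[1,\infty)$, $d_p(\|\cdot\|,\|\cdot\|')^p=N^{-1}\sum_i|\lambda_i|^p$ and $d_\infty=\max_i|\lambda_i|$. Given a Hermitian norm $\|\cdot\|$ with orthogonal basis $\underline v$ and $\underline a\in\mathbb R^N$, $\iota_{\underline v}(\|\cdot\|,\underline a)$ is the Hermitian norm with orthogonal basis $\underline v$ and $\iota_{\underline v}(\|\cdot\|,\underline a)(v_i)=\|v_i\|e^{-a_i}$. For any norm $\|\cdot\|'$, let $\|\cdot\|^{NA}_{\underline v,\underline a}$ be the non-Archimedean norm $\|\sum\alpha_iv_i\|^{NA}_{\underline v,\underline a}=\max_{i:\alpha_i\ne0}e^{-a_i}$, and define $\iota^1_{\underline v}(\|\cdot\|',\underline a)(w)=\inf\{\sum_j\|w_j\|'\,\|w_j\|^{NA}_{\underline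 v,\underline a}: w=\sum_j w_j\}$, the infimum over all finite decompositions of $w$ as a sum of vectors of $V$. *)

theory Defs
  imports "HOL-Analysis.Analysis"
begin

text \<open>The complex vector space V is a type 'v with a scalar multiplication
  smul :: complex => 'v => 'v satisfying the vector_space axioms (library locale).\<close>

definition is_norm :: "(complex \<Rightarrow> 'v \<Rightarrow> 'v) \<Rightarrow> ('v::ab_group_add \<Rightarrow> real) \<Rightarrow> bool" where
  "is_norm smul nrm \<longleftrightarrow>
     (\<forall>x. 0 \<le> nrm x) \<and> (\<forall>x. nrm x = 0 \<longleftrightarrow> x = 0) \<and>
     (\<forall>c x. nrm (smul c x) = cmod c * nrm x) \<and>
     (\<forall>x y. nrm (x + y) \<le> nrm x + nrm y)"

definition hermitian_form :: "(complex \<Rightarrow> 'v \<Rightarrow> 'v) \<Rightarrow> ('v::ab_group_add \<Rightarrow> 'v \<Rightarrow> complex) \<Rightarrow> bool" where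
  "hermitian_form smul h \<longleftrightarrow>
     (\<forall>x y z. h (x + y) z = h x z + h y z) \<and>
     (\<forall>c x y. h (smul c x) y = c * h x y) \<and>
     (\<forall>x y. h x y = cnj (h y x)) \<and>
     (\<forall>x. x \<noteq> 0 \<longrightarrow> 0 < Re (h x x))"

definition hermitian_norm_orth :: "(complex \<Rightarrow> 'v \<Rightarrow> 'v) \<Rightarrow> ('v::ab_group_add \<Rightarrow> real) \<Rightarrow> nat \<Rightarrow> (nat \<Rightarrow> 'v) \<Rightarrow> bool" where
  "hermitian_norm_orth smul nrm N v \<longleftrightarrow>
     (\<exists>h. hermitian_form smul h \<and> (\<forall>x. nrm x = sqrt (Re (h x x))) \<and>
          (\<forall>i<N. \<forall>j<N. i \<noteq> j \<longrightarrow> h (v i) (v j) = 0))"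

definition is_basis :: "(complex \<Rightarrow> 'v \<Rightarrow> 'v) \<Rightarrow> nat \<Rightarrow> (nat \<Rightarrow> 'v::ab_group_add) \<Rightarrow> bool" where
  "is_basis smul N v \<longleftrightarrow> inj_on v {..<N} \<and> \<not> module.dependent smul (v ` {..<N}) \<and>
     module.span smul (v ` {..<N}) = UNIV"

definition coord :: "(complex \<Rightarrow> 'v \<Rightarrow> 'v) \<Rightarrow> nat \<Rightarrow> (nat \<Rightarrow> 'v::ab_group_add) \<Rightarrow> 'v \<Rightarrow> nat \<Rightarrow> complex" where
  "coord smul N v w i = module.representation smul (v ` {..<N}) w (v i)"

definition succ_min :: "(complex \<Rightarrow> 'v \<Rightarrow> 'v) \<Rightarrow> ('v::ab_group_add \<Rightarrow> real) \<Rightarrow> ('v \<Rightarrow> real) \<Rightarrow> nat \<Rightarrow> real" where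
  "succ_min smul n1 n2 i =
     (SUP W \<in> {W. module.subspace smul W \<and> vector_space.dim smul W = i}.
        INF w \<in> W - {0}. ln (n2 w / n1 w))"

definition dist_p :: "(complex \<Rightarrow> 'v \<Rightarrow> 'v) \<Rightarrow> nat \<Rightarrow> ereal \<Rightarrow> ('v::ab_group_add \<Rightarrow> real) \<Rightarrow> ('v \<Rightarrow> real) \<Rightarrow> real" where
  "dist_p smul N p n1 n2 =
     (if p = \<infinity> then Max ((\<lambda>i. \<bar>succ_min smul n1 n2 i\<bar>) ` {1..N})
      else ((\<Sum>i=1..N. \<bar>succ_min smul n1 n2 i\<bar> powr real_of_ereal p) / real N)
             powr (1 / real_of_ereal p))"

text \<open>iota_v(nrm, a): the Hermitian norm with orthogonal basis v and
  iota(v_i) = nrm(v_i) e^(-a_i), written out in coordinates.\<close>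
definition iota :: "(complex \<Rightarrow> 'v \<Rightarrow> 'v) \<Rightarrow> nat \<Rightarrow> (nat \<Rightarrow> 'v::ab_group_add) \<Rightarrow> ('v \<Rightarrow> real) \<Rightarrow> (nat \<Rightarrow> real) \<Rightarrow> 'v \<Rightarrow> real" where
  "iota smul N v nrm a w =
     sqrt (\<Sum>i<N. (cmod (coord smul N v w i))\<^sup>2 * (nrm (v i) * exp (- a i))\<^sup>2)"

definition na_norm :: "(complex \<Rightarrow> 'v \<Rightarrow> 'v) \<Rightarrow> nat \<Rightarrow> (nat \<Rightarrow> 'v::ab_group_add) \<Rightarrow> (nat \<Rightarrow> real) \<Rightarrow> 'v \<Rightarrow> real" where
  "na_norm smul N v a w =
     (if w = 0 then 0 else Max ((\<lambda>i. exp (- a i)) ` {i. i < N \<and> coord smul N v w i \<noteq> 0}))"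

definition iota1 :: "(complex \<Rightarrow> 'v \<Rightarrow> 'v) \<Rightarrow> nat \<Rightarrow> (nat \<Rightarrow> 'v::ab_group_add) \<Rightarrow> ('v \<Rightarrow> real) \<Rightarrow> (nat \<Rightarrow> real) \<Rightarrow> 'v \<Rightarrow> real" where
  "iota1 smul N v nrm a w =
     Inf {(\<Sum>u\<leftarrow>ws. nrm u * na_norm smul N v a u) | ws. sum_list ws = w}"

end

theory Submission
  imports Defs
begin

text \<open>For weights \<open>\<rho>\<close> let \<open>\<ell>\<^sub>\<rho>\<close> be the \<open>\<rho>\<close>-weighted \<open>\<ell>\<^sup>2\<close>-norm of the coordinates in the
  basis \<open>v\<close>. The Hermitian norm is \<open>\<ell>\<^sub>\<rho>\<close> with \<open>\<rho> i = \<parallel>v i\<parallel>\<close>, and \<open>\<iota>\<close> is \<open>\<ell>\<^sub>\<sigma>\<close> with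
  \<open>\<sigma> i = \<rho> i * exp (- a i)\<close>. For two norms, \<open>\<lambda>\<^sub>N \<le> log (\<parallel>w\<parallel>' / \<parallel>w\<parallel>) \<le> \<lambda>\<^sub>1\<close> for all
  \<open>w \<noteq> 0\<close>, so with \<open>D = d\<^sub>\<infinity>(\<parallel>\<cdot>\<parallel>, \<parallel>\<cdot>\<parallel>')\<close> we get \<open>exp (- D) \<parallel>u\<parallel> \<le> \<parallel>u\<parallel>' \<le> exp D \<parallel>u\<parallel>\<close>.
  As \<open>\<ell>\<^sub>\<sigma> u \<le> \<parallel>u\<parallel> \<parallel>u\<parallel>\<^sup>N\<^sup>A\<close>, every decomposition \<open>w = \<Sum> w\<^sub>j\<close> costs at least
  \<open>exp (- D) \<iota> w\<close>, while the decomposition of \<open>w\<close> along the basis costs at most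
  \<open>N exp D \<iota> w\<close>. Hence \<open>|log (\<iota>\<^sup>1 w / \<iota> w)| \<le> D + log N\<close> for all \<open>w \<noteq> 0\<close>; this bounds
  every successive minimum of the pair \<open>(\<iota>, \<iota>\<^sup>1)\<close> and therefore every \<open>d\<^sub>p\<close>.\<close>

lemma abs_ln_div_le_iff:
  fixes x y D :: real
  assumes "0 < x" "0 < y"
  shows "\<bar>ln (x / y)\<bar> \<le> D \<longleftrightarrow> exp (- D) * y \<le> x \<and> x \<le> exp D * y"
proof -
  have q: "0 < x / y" using assms by simp
  have "ln (x / y) \<le> D \<longleftrightarrow> x / y \<le> exp D"
    using ln_le_cancel_iff[OF q exp_gt_zero] by simp
  moreover have "- D \<le> ln (x / y) \<longleftrightarrow> exp (- D) \<le> x / y"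
    by (rule ln_ge_iff[OF q])
  ultimately show ?thesis
    using assms by (auto simp: abs_le_iff field_simps)
qed

lemma abs_cINF_le:
  fixes f :: "'a \<Rightarrow> real"
  assumes "A \<noteq> {}" "\<And>x. x \<in> A \<Longrightarrow> \<bar>f x\<bar> \<le> C"
  shows "\<bar>INF x\<in>A. f x\<bar> \<le> C"
proof -
  obtain x0 where x0: "x0 \<in> A" using assms(1) by blast
  have "bdd_below (f ` A)"
    by (rule bdd_belowI2[of _ "- C"]) (use assms(2) in force)
  then have "(INF x\<in>A. f x) \<le> C"
    using x0 assms(2)[OF x0] by (intro cINF_lower2) auto
  moreover have "- C \<le> (INF x\<in>A. f x)"
    by (rule cINF_greatest[OF assms(1)]) (use assms(2) in force)
  ultimately show ?thesis by simp
qed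

lemma abs_cSUP_le:
  fixes f :: "'a \<Rightarrow> real"
  assumes "A \<noteq> {}" "\<And>x. x \<in> A \<Longrightarrow> \<bar>f x\<bar> \<le> C"
  shows "\<bar>SUP x\<in>A. f x\<bar> \<le> C"
proof -
  have "\<bar>INF x\<in>A. - f x\<bar> \<le> C"
    using assms by (intro abs_cINF_le) auto
  moreover have "(INF x\<in>A. - f x) = - (SUP x\<in>A. f x)"
    by (simp add: Inf_real_def image_image)
  ultimately show ?thesis by simp
qed

lemma bounded_seq_has_convergent_subseq:
  fixes \<alpha> :: "nat \<Rightarrow> nat \<Rightarrow> complex"
  shows "(\<And>k i. i < m \<Longrightarrow> cmod (\<alpha> k i) \<le> b i)
    \<Longrightarrow> \<exists>r \<beta>. strict_mono r \<and> (\<forall>i<m. (\<lambda>k. \<alpha> (r k) i) \<longlonglongrightarrow> \<beta> i)"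
proof (induction m)
  case 0
  show ?case using strict_mono_id by blast
next
  case (Suc m)
  then obtain r \<beta> where r: "strict_mono r" and lim: "\<forall>i<m. (\<lambda>k. \<alpha> (r k) i) \<longlonglongrightarrow> \<beta> i"
    by (metis less_SucI)
  have "bounded (range (\<lambda>k. \<alpha> (r k) m))"
    using Suc.prems by (auto simp: bounded_iff)
  then obtain l r' where r': "strict_mono r'" and lim_m: "((\<lambda>k. \<alpha> (r k) m) \<circ> r') \<longlonglongrightarrow> l"
    using bounded_imp_convergent_subsequence by blast
  have "(\<lambda>k. \<alpha> ((r \<circ> r') k) i) \<longlonglongrightarrow> (\<beta>(m := l)) i" if "i < Suc m" for i
  proof (cases "i = m")
    case False
    with that lim have "(\<lambda>k. \<alpha> (r k) i) \<longlonglongrightarrow> \<beta> i" by simp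
    from LIMSEQ_subseq_LIMSEQ[OF this r'] False show ?thesis by (simp add: comp_def)
  qed (use lim_m in \<open>simp add: comp_def\<close>)
  moreover have "strict_mono (r \<circ> r')" using r r' by (rule strict_mono_o)
  ultimately show ?case by blast
qed

lemma is_norm_nonneg: "is_norm smul nrm \<Longrightarrow> 0 \<le> nrm x"
  and is_norm_eq_0_iff: "is_norm smul nrm \<Longrightarrow> nrm x = 0 \<longleftrightarrow> x = 0"
  and is_norm_scale: "is_norm smul nrm \<Longrightarrow> nrm (smul c x) = cmod c * nrm x"
  and is_norm_triangle: "is_norm smul nrm \<Longrightarrow> nrm (x + y) \<le> nrm x + nrm y"
  unfolding is_norm_def by blast+

lemma is_norm_pos: "is_norm smul nrm \<Longrightarrow> x \<noteq> 0 \<Longrightarrow> 0 < nrm x"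
  using is_norm_nonneg is_norm_eq_0_iff by (metis less_eq_real_def)

lemma is_norm_zero: "is_norm smul nrm \<Longrightarrow> nrm 0 = 0"
  by (simp add: is_norm_eq_0_iff)

lemma is_norm_sum_list_le:
  assumes "is_norm smul nrm"
  shows "nrm (sum_list xs) \<le> (\<Sum>x\<leftarrow>xs. nrm x)"
proof (induction xs)
  case (Cons x xs)
  then show ?case using is_norm_triangle[OF assms, of x "sum_list xs"] by simp
qed (simp add: is_norm_zero[OF assms])

lemma is_norm_sum_le:
  assumes "is_norm smul nrm"
  shows "nrm (\<Sum>i\<in>I. f i) \<le> (\<Sum>i\<in>I. nrm (f i))"
proof (induction I rule: infinite_finite_induct)
  case (insert x F)
  then show ?case using is_norm_triangle[OF assms, of "f x" "sum f F"] by simp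
qed (simp_all add: is_norm_zero[OF assms])

context
  fixes smul :: "complex \<Rightarrow> 'v::ab_group_add \<Rightarrow> 'v" and h
  assumes h: "hermitian_form smul h"
begin

lemma hermitian_add_left: "h (x + y) z = h x z + h y z"
  and hermitian_scale_left: "h (smul c x) y = c * h x y"
  and hermitian_cnj: "h x y = cnj (h y x)"
  and hermitian_pos: "x \<noteq> 0 \<Longrightarrow> 0 < Re (h x x)"
  using h unfolding hermitian_form_def by blast+

lemma hermitian_add_right: "h x (y + z) = h x y + h x z"
  by (metis hermitian_cnj hermitian_add_left complex_cnj_add)

lemma hermitian_scale_right: "h x (smul c y) = cnj c * h x y"
  by (metis hermitian_cnj hermitian_scale_left complex_cnj_mult complex_cnj_cnj)

lemma hermitian_zero_left: "h 0 y = 0"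
  using hermitian_add_left[of 0 0 y] by simp

lemma hermitian_zero_right: "h x 0 = 0"
  using hermitian_add_right[of x 0 0] by simp

lemma hermitian_sum_left: "h (\<Sum>i\<in>I. f i) y = (\<Sum>i\<in>I. h (f i) y)"
  by (induction I rule: infinite_finite_induct) (auto simp: hermitian_add_left hermitian_zero_left)

lemma hermitian_sum_right: "h x (\<Sum>i\<in>I. f i) = (\<Sum>i\<in>I. h x (f i))"
  by (induction I rule: infinite_finite_induct) (auto simp: hermitian_add_right hermitian_zero_right)

lemma hermitian_Re_nonneg: "0 \<le> Re (h x x)"
  using hermitian_pos[of x] hermitian_zero_left by (cases "x = 0") auto

lemma hermitian_pythagoras:
  fixes N :: nat
  assumes orth: "\<forall>i<N. \<forall>j<N. i \<noteq> j \<longrightarrow> h (v i) (v j) = 0"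
  shows "Re (h (\<Sum>i<N. smul (\<alpha> i) (v i)) (\<Sum>i<N. smul (\<alpha> i) (v i)))
        = (\<Sum>i<N. (cmod (\<alpha> i))\<^sup>2 * Re (h (v i) (v i)))"
proof -
  have "h (\<Sum>i<N. smul (\<alpha> i) (v i)) (\<Sum>j<N. smul (\<alpha> j) (v j))
      = (\<Sum>i<N. \<Sum>j<N. \<alpha> i * cnj (\<alpha> j) * h (v i) (v j))"
    by (simp add: hermitian_sum_left hermitian_sum_right hermitian_scale_left
        hermitian_scale_right sum_distrib_left mult_ac) (subst sum.swap, simp)
  also have "\<dots> = (\<Sum>i<N. \<alpha> i * cnj (\<alpha> i) * h (v i) (v i))"
  proof (rule sum.cong[OF refl])
    fix i assume "i \<in> {..<N}"
    then show "(\<Sum>j<N. \<alpha> i * cnj (\<alpha> j) * h (v i) (v j)) = \<alpha> i * cnj (\<alpha> i) * h (v i) (v i)"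
      using orth by (subst sum.remove[of _ i]) (auto intro!: sum.neutral)
  qed
  finally show ?thesis
    by (simp add: complex_mult_cnj cmod_power2 Re_sum flip: of_real_power)
qed

end

locale coord_basis = vector_space smul for smul :: "complex \<Rightarrow> 'v::ab_group_add \<Rightarrow> 'v" +
  fixes N :: nat and v :: "nat \<Rightarrow> 'v"
  assumes basis: "is_basis smul N v"
begin

abbreviation "\<gamma> \<equiv> coord smul N v"

lemma inj_basis: "inj_on v {..<N}"
  and independent_basis: "independent (v ` {..<N})"
  and span_basis: "span (v ` {..<N}) = UNIV"
  using basis unfolding is_basis_def by auto

sublocale finite_dim: finite_dimensional_vector_space smul "v ` {..<N}"
  by unfold_locales (use independent_basis span_basis in auto)

lemma coord_expansion: "w = (\<Sum>i<N. smul (\<gamma> w i) (v i))"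
proof -
  have "w = (\<Sum>b\<in>v ` {..<N}. smul (representation (v ` {..<N}) w b) b)"
    by (rule sum_representation_eq[symmetric]) (use independent_basis span_basis in auto)
  also have "\<dots> = (\<Sum>i<N. smul (\<gamma> w i) (v i))"
    by (simp add: sum.reindex[OF inj_basis] coord_def)
  finally show ?thesis .
qed

lemma coord_add: "\<gamma> (x + y) i = \<gamma> x i + \<gamma> y i"
  unfolding coord_def by (simp add: representation_add[OF independent_basis] span_basis)

lemma coord_diff: "\<gamma> (x - y) i = \<gamma> x i - \<gamma> y i"
  unfolding coord_def by (simp add: representation_diff[OF independent_basis] span_basis)

lemma coord_scale: "\<gamma> (smul c x) i = c * \<gamma> x i"
  unfolding coord_def by (simp add: representation_scale[OF independent_basis] span_basis)

lemma coord_zero: "\<gamma> 0 i = 0"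
  unfolding coord_def by (simp add: representation_zero)

lemma coord_basis_vector: "i < N \<Longrightarrow> j < N \<Longrightarrow> \<gamma> (v i) j = (if j = i then 1 else 0)"
  unfolding coord_def using inj_basis
  by (auto simp: representation_basis[OF independent_basis] inj_on_def)

lemma coord_sum:
  assumes "j < N"
  shows "\<gamma> (\<Sum>i<N. smul (\<alpha> i) (v i)) j = \<alpha> j"
proof -
  have "\<gamma> (\<Sum>i<N. smul (\<alpha> i) (v i)) j = (\<Sum>i<N. \<alpha> i * \<gamma> (v i) j)"
    unfolding coord_def
    by (simp add: representation_sum[OF independent_basis] representation_scale[OF independent_basis]
        span_basis)
  also have "\<dots> = (\<Sum>i<N. if i = j then \<alpha> i else 0)"
    by (rule sum.cong) (use assms in \<open>auto simp: coord_basis_vector\<close>)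
  finally show ?thesis using assms by simp
qed

lemma eq_zero_if_coords_zero: "(\<And>i. i < N \<Longrightarrow> \<gamma> w i = 0) \<Longrightarrow> w = 0"
  by (subst coord_expansion) simp

lemma basis_nonzero: "i < N \<Longrightarrow> v i \<noteq> 0"
  using coord_basis_vector[of i i] coord_zero by force

lemma dim_UNIV_eq: "dim (UNIV :: 'v set) = N"
  using inj_basis by (simp add: card_image)

lemma subspaces_dim_N: "{W. subspace W \<and> dim W = N} = {UNIV}"
proof -
  have "W = UNIV" if "subspace W" "dim W = N" for W
  proof -
    have "span W = UNIV"
      using that finite_dim.dim_eq_full dim_UNIV_eq by (simp add: finite_dim.dimension_def)
    with that show "W = UNIV" using span_eq_iff by metis
  qed
  then show ?thesis using dim_UNIV_eq subspace_UNIV by auto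
qed

lemma ex_subspace_dim: "i \<le> N \<Longrightarrow> \<exists>W. subspace W \<and> dim W = i"
proof -
  assume "i \<le> N"
  then have "v ` {..<i} \<subseteq> v ` {..<N}" "{..<i} \<subseteq> {..<N}" by auto
  then have "independent (v ` {..<i})" "inj_on v {..<i}"
    using independent_mono[OF independent_basis] inj_on_subset[OF inj_basis] by blast+
  then show ?thesis
    using dim_span_eq_card_independent by (metis card_image card_lessThan subspace_span)
qed

lemma nonzero_in_positive_dim: "dim W = i \<Longrightarrow> 1 \<le> i \<Longrightarrow> W - {0} \<noteq> {}"
  using finite_dim.dim_subset[of W "{0}"] by auto

definition coord_l2_norm :: "(nat \<Rightarrow> real) \<Rightarrow> 'v \<Rightarrow> real" where
  "coord_l2_norm \<rho> w = L2_set (\<lambda>i. cmod (\<gamma> w i) * \<rho> i) {..<N}"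

lemma coord_le_coord_l2_norm: "i < N \<Longrightarrow> cmod (\<gamma> w i) * \<rho> i \<le> coord_l2_norm \<rho> w"
  unfolding coord_l2_norm_def by (rule member_le_L2_set) auto

lemma coord_l2_norm_basis_vector:
  assumes "i < N" "0 \<le> \<rho> i"
  shows "coord_l2_norm \<rho> (v i) = \<rho> i"
proof -
  have "coord_l2_norm \<rho> (v i) = L2_set (\<lambda>j. if j = i then \<rho> i else 0) {..<N}"
    unfolding coord_l2_norm_def using assms(1) by (intro L2_set_cong) (auto simp: coord_basis_vector)
  also have "\<dots> = \<rho> i"
    unfolding L2_set_def using assms by (simp add: if_distrib[of "\<lambda>x. x\<^sup>2"] cong: if_cong)
  finally show ?thesis .
qed

lemma is_norm_coord_l2_norm:
  assumes \<rho>: "\<And>i. i < N \<Longrightarrow> 0 < \<rho> i"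
  shows "is_norm smul (coord_l2_norm \<rho>)"
  unfolding is_norm_def
proof (intro conjI allI)
  fix x y :: 'v and c :: complex
  show "0 \<le> coord_l2_norm \<rho> x" by (simp add: coord_l2_norm_def)
  show "coord_l2_norm \<rho> x = 0 \<longleftrightarrow> x = 0"
    using \<rho> eq_zero_if_coords_zero[of x]
    by (auto simp: coord_l2_norm_def L2_set_eq_0_iff coord_zero less_imp_neq[symmetric])
  show "coord_l2_norm \<rho> (smul c x) = cmod c * coord_l2_norm \<rho> x"
    by (simp add: coord_l2_norm_def coord_scale norm_mult L2_set_right_distrib mult.assoc)
  have "coord_l2_norm \<rho> (x + y)
      \<le> L2_set (\<lambda>i. cmod (\<gamma> x i) * \<rho> i + cmod (\<gamma> y i) * \<rho> i) {..<N}"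
    unfolding coord_l2_norm_def coord_add
  proof (rule L2_set_mono)
    fix i assume "i \<in> {..<N}"
    then have "0 \<le> \<rho> i" using \<rho> by (simp add: less_imp_le)
    then show "cmod (\<gamma> x i + \<gamma> y i) * \<rho> i \<le> cmod (\<gamma> x i) * \<rho> i + cmod (\<gamma> y i) * \<rho> i"
      and "0 \<le> cmod (\<gamma> x i + \<gamma> y i) * \<rho> i"
      by (auto simp flip: distrib_right intro: mult_right_mono norm_triangle_ineq)
  qed
  also have "\<dots> \<le> coord_l2_norm \<rho> x + coord_l2_norm \<rho> y"
    unfolding coord_l2_norm_def by (rule L2_set_triangle_ineq)
  finally show "coord_l2_norm \<rho> (x + y) \<le> coord_l2_norm \<rho> x + coord_l2_norm \<rho> y" .
qed

lemma is_norm_le_coord_sum: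
  assumes "is_norm smul nrm"
  shows "nrm w \<le> (\<Sum>i<N. cmod (\<gamma> w i) * nrm (v i))"
proof -
  have "nrm w = nrm (\<Sum>i<N. smul (\<gamma> w i) (v i))"
    by (subst coord_expansion) simp
  also have "\<dots> \<le> (\<Sum>i<N. nrm (smul (\<gamma> w i) (v i)))"
    by (rule is_norm_sum_le[OF assms])
  also have "\<dots> = (\<Sum>i<N. cmod (\<gamma> w i) * nrm (v i))"
    by (simp add: is_norm_scale[OF assms])
  finally show ?thesis .
qed

lemma is_norm_le_coord_l2_norm:
  assumes "is_norm smul nrm" "\<And>i. i < N \<Longrightarrow> 0 < \<rho> i"
  shows "nrm w \<le> (\<Sum>i<N. nrm (v i) / \<rho> i) * coord_l2_norm \<rho> w"
proof -
  have "cmod (\<gamma> w i) * nrm (v i) \<le> coord_l2_norm \<rho> w * (nrm (v i) / \<rho> i)" if "i < N" for i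
  proof -
    have "cmod (\<gamma> w i) * nrm (v i) = cmod (\<gamma> w i) * \<rho> i * (nrm (v i) / \<rho> i)"
      using assms(2)[OF that] by simp
    also have "\<dots> \<le> coord_l2_norm \<rho> w * (nrm (v i) / \<rho> i)"
      using coord_le_coord_l2_norm[OF that] assms(2)[OF that] is_norm_nonneg[OF assms(1)]
      by (intro mult_right_mono) auto
    finally show ?thesis .
  qed
  then have "(\<Sum>i<N. cmod (\<gamma> w i) * nrm (v i)) \<le> (\<Sum>i<N. coord_l2_norm \<rho> w * (nrm (v i) / \<rho> i))"
    by (intro sum_mono) simp
  then have "nrm w \<le> (\<Sum>i<N. coord_l2_norm \<rho> w * (nrm (v i) / \<rho> i))"
    using is_norm_le_coord_sum[OF assms(1)] by (rule order_trans[rotated])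
  then show ?thesis by (simp add: sum_distrib_left mult.commute)
qed

lemma is_norm_tendsto_coords:
  assumes nrm: "is_norm smul nrm" and lim: "\<And>i. i < N \<Longrightarrow> (\<lambda>k. \<gamma> (x k) i) \<longlonglongrightarrow> \<gamma> y i"
  shows "(\<lambda>k. nrm (x k)) \<longlonglongrightarrow> nrm y"
proof -
  define e where "e k = (\<Sum>i<N. cmod (\<gamma> (x k) i - \<gamma> y i) * nrm (v i))" for k
  have bound: "\<forall>k. norm (nrm (x k) - nrm y) \<le> e k"
  proof
    fix k
    have "nrm (x k) \<le> nrm y + nrm (x k - y)" "nrm y \<le> nrm (x k) + nrm (y - x k)"
      using is_norm_triangle[OF nrm, of y "x k - y"] is_norm_triangle[OF nrm, of "x k" "y - x k"]
      by simp_all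
    moreover have "nrm (x k - y) \<le> e k" "nrm (y - x k) \<le> e k"
      using is_norm_le_coord_sum[OF nrm, of "x k - y"] is_norm_le_coord_sum[OF nrm, of "y - x k"]
      by (simp_all add: e_def coord_diff norm_minus_commute)
    ultimately show "norm (nrm (x k) - nrm y) \<le> e k" by (simp add: abs_le_iff)
  qed
  have "e \<longlonglongrightarrow> (\<Sum>i<N. cmod (\<gamma> y i - \<gamma> y i) * nrm (v i))"
    unfolding e_def by (intro tendsto_sum tendsto_mult_right tendsto_norm tendsto_diff lim tendsto_const) simp
  then have "e \<longlonglongrightarrow> 0" by simp
  with bound have "(\<lambda>k. nrm (x k) - nrm y) \<longlonglongrightarrow> 0"
    by (rule Lim_null_comparison[OF always_eventually])
  then show ?thesis by (subst Lim_null)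
qed

text \<open>Otherwise normalising yields \<open>u\<^sub>j\<close> with \<open>\<ell>\<^sub>\<rho>(u\<^sub>j) = 1\<close> and \<open>nrm u\<^sub>j \<rightarrow> 0\<close>; a coordinatewise
  convergent subsequence has a limit \<open>y\<close> with \<open>nrm y = 0\<close> but \<open>\<ell>\<^sub>\<rho>(y) = 1\<close>.\<close>

lemma coord_l2_norm_le_is_norm:
  assumes nrm: "is_norm smul nrm" and \<rho>: "\<And>i. i < N \<Longrightarrow> 0 < \<rho> i"
  shows "\<exists>k>0. \<forall>w. k * coord_l2_norm \<rho> w \<le> nrm w"
proof (rule ccontr)
  let ?L = "coord_l2_norm \<rho>"
  have L: "is_norm smul ?L" using \<rho> by (rule is_norm_coord_l2_norm)
  assume neg: "\<not> ?thesis"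
  have "\<exists>w. nrm w < inverse (real (Suc j)) * ?L w" for j
  proof -
    have "0 < inverse (real (Suc j))" by simp
    with neg show ?thesis by (auto simp: not_le)
  qed
  then obtain w where w: "\<And>j. nrm (w j) < inverse (real (Suc j)) * ?L (w j)"
    by metis
  have w_nz: "w j \<noteq> 0" for j
    using w[of j] by (auto simp: is_norm_zero[OF nrm] is_norm_zero[OF L])
  define u where "u j = smul (of_real (inverse (?L (w j)))) (w j)" for j
  have L_u: "?L (u j) = 1" for j
    using is_norm_pos[OF L w_nz[of j]] by (simp add: u_def is_norm_scale[OF L] norm_inverse)
  have nrm_u: "nrm (u j) < inverse (real (Suc j))" for j
  proof -
    have p: "0 < ?L (w j)" using is_norm_pos[OF L w_nz[of j]] .
    then have "nrm (u j) = inverse (?L (w j)) * nrm (w j)"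
      by (simp add: u_def is_norm_scale[OF nrm] norm_inverse)
    also have "\<dots> < inverse (?L (w j)) * (inverse (real (Suc j)) * ?L (w j))"
      using w[of j] p by (intro mult_strict_left_mono) auto
    also have "\<dots> = inverse (real (Suc j))" using p by simp
    finally show ?thesis .
  qed
  have coord_bound: "cmod (\<gamma> (u j) i) \<le> inverse (\<rho> i)" if "i < N" for i j
    using coord_le_coord_l2_norm[OF that, of "u j" \<rho>] \<rho>[OF that] L_u by (simp add: field_simps)
  obtain r \<beta> where r: "strict_mono r" and \<beta>: "\<forall>i<N. (\<lambda>k. \<gamma> (u (r k)) i) \<longlonglongrightarrow> \<beta> i"
    using bounded_seq_has_convergent_subseq[of N "\<lambda>j. \<gamma> (u j)", OF coord_bound] by blast
  define y where "y = (\<Sum>i<N. smul (\<beta> i) (v i))"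
  have lim: "(\<lambda>k. \<gamma> (u (r k)) i) \<longlonglongrightarrow> \<gamma> y i" if "i < N" for i
    using \<beta> that by (simp add: y_def coord_sum)
  have "(\<lambda>k. nrm (u (r k))) \<longlonglongrightarrow> 0"
  proof (rule tendsto_sandwich[of "\<lambda>_. 0" _ _ "\<lambda>k. inverse (real (Suc (r k)))"])
    show "(\<lambda>k. inverse (real (Suc (r k)))) \<longlonglongrightarrow> 0"
      using LIMSEQ_subseq_LIMSEQ[OF LIMSEQ_inverse_real_of_nat r] by (simp add: comp_def)
  qed (use nrm_u is_norm_nonneg[OF nrm] in \<open>auto intro!: always_eventually less_imp_le\<close>)
  with is_norm_tendsto_coords[OF nrm lim] have "nrm y = 0"
    using LIMSEQ_unique by blast
  then have "y = 0" using is_norm_eq_0_iff[OF nrm] by blast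
  then have "(\<lambda>k. ?L (u (r k))) \<longlonglongrightarrow> 0"
    using is_norm_tendsto_coords[OF L lim] is_norm_zero[OF L] by simp
  then show False
    using L_u by (simp add: LIMSEQ_const_iff)
qed

lemma is_norm_le_const_mult:
  assumes m1: "is_norm smul m1" and m2: "is_norm smul m2"
  shows "\<exists>C>0. \<forall>w. m2 w \<le> C * m1 w"
proof -
  let ?L = "coord_l2_norm (\<lambda>_. 1)"
  obtain k where k: "k > 0" "\<And>w. k * ?L w \<le> m1 w"
    using coord_l2_norm_le_is_norm[OF m1, of "\<lambda>_. 1"] by auto
  define A where "A = (\<Sum>i<N. m2 (v i))"
  have "A \<ge> 0" using is_norm_nonneg[OF m2] by (simp add: A_def sum_nonneg)
  have "m2 w \<le> (A / k + 1) * m1 w" for w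
  proof -
    have "m2 w \<le> A * ?L w" using is_norm_le_coord_l2_norm[OF m2, of "\<lambda>_. 1"] by (simp add: A_def)
    also have "\<dots> \<le> A * (m1 w / k)"
      using k \<open>A \<ge> 0\<close> by (intro mult_left_mono) (auto simp: field_simps)
    also have "\<dots> \<le> (A / k + 1) * m1 w"
      using is_norm_nonneg[OF m1] by (simp add: field_simps)
    finally show ?thesis .
  qed
  moreover have "A / k + 1 > 0" using \<open>A \<ge> 0\<close> k(1) by (simp add: add_nonneg_pos)
  ultimately show ?thesis by blast
qed

text \<open>This boundedness is what makes the conditionally complete \<open>SUP\<close> and \<open>INF\<close> in
  \<^const>\<open>succ_min\<close> meaningful.\<close>

lemma is_norms_ln_div_bounded:
  assumes m1: "is_norm smul m1" and m2: "is_norm smul m2"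
  shows "\<exists>K. \<forall>w. w \<noteq> 0 \<longrightarrow> \<bar>ln (m2 w / m1 w)\<bar> \<le> K"
proof -
  obtain C1 C2 where C: "C1 > 0" "C2 > 0" "\<And>w. m2 w \<le> C1 * m1 w" "\<And>w. m1 w \<le> C2 * m2 w"
    using is_norm_le_const_mult[OF m1 m2] is_norm_le_const_mult[OF m2 m1] by metis
  have "\<bar>ln (m2 w / m1 w)\<bar> \<le> ln (C1 + C2)" if "w \<noteq> 0" for w
  proof (subst abs_ln_div_le_iff)
    show "0 < m2 w" "0 < m1 w" using is_norm_pos that m1 m2 by blast+
    have "C1 * m1 w \<le> (C1 + C2) * m1 w" "C2 * m2 w \<le> (C1 + C2) * m2 w"
      using C is_norm_nonneg[OF m1] is_norm_nonneg[OF m2] by (auto intro!: mult_right_mono)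
    then have "m2 w \<le> (C1 + C2) * m1 w" "m1 w \<le> (C1 + C2) * m2 w"
      using C(3,4)[of w] by linarith+
    then show "exp (- ln (C1 + C2)) * m1 w \<le> m2 w \<and> m2 w \<le> exp (ln (C1 + C2)) * m1 w"
      using C by (simp add: exp_minus field_simps)
  qed
  then show ?thesis by blast
qed

lemma abs_succ_min_le:
  assumes "1 \<le> i" "i \<le> N" and bound: "\<And>w. w \<noteq> 0 \<Longrightarrow> \<bar>ln (m2 w / m1 w)\<bar> \<le> C"
  shows "\<bar>succ_min smul m1 m2 i\<bar> \<le> C"
  unfolding succ_min_def
proof (rule abs_cSUP_le)
  show "{W. subspace W \<and> dim W = i} \<noteq> {}" using ex_subspace_dim[OF assms(2)] by auto
  fix W assume "W \<in> {W. subspace W \<and> dim W = i}"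
  then show "\<bar>INF w\<in>W - {0}. ln (m2 w / m1 w)\<bar> \<le> C"
    using nonzero_in_positive_dim assms(1) bound by (intro abs_cINF_le) auto
qed

lemma ln_div_le_succ_min_one:
  assumes m1: "is_norm smul m1" and m2: "is_norm smul m2" and w: "w \<noteq> 0"
  shows "ln (m2 w / m1 w) \<le> succ_min smul m1 m2 1"
proof -
  obtain K where K: "\<And>x. x \<noteq> 0 \<Longrightarrow> \<bar>ln (m2 x / m1 x)\<bar> \<le> K"
    using is_norms_ln_div_bounded[OF m1 m2] by blast
  have const: "ln (m2 x / m1 x) = ln (m2 w / m1 w)" if "x \<in> span {w} - {0}" for x
  proof -
    have "x \<in> range (\<lambda>c. smul c w)" using that span_singleton by blast
    then obtain c where x: "x = smul c w" by blast
    with that have "c \<noteq> 0" by auto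
    then show ?thesis
      by (simp only: x is_norm_scale[OF m1] is_norm_scale[OF m2] mult_divide_mult_cancel_left_if
          norm_eq_zero if_False)
  qed
  have "span {w} - {0} \<noteq> {}" using w span_base by auto
  then have "ln (m2 w / m1 w) = (INF x\<in>span {w} - {0}. ln (m2 w / m1 w))"
    by (rule cINF_const[symmetric])
  also have "\<dots> = (INF x\<in>span {w} - {0}. ln (m2 x / m1 x))"
    using const by (intro INF_cong[OF refl]) simp
  also have "\<dots> \<le> (SUP W\<in>{W. subspace W \<and> dim W = 1}. INF x\<in>W - {0}. ln (m2 x / m1 x))"
  proof (rule cSUP_upper)
    show "span {w} \<in> {W. subspace W \<and> dim W = 1}"
      using w by (auto simp: subspace_span)
    show "bdd_above ((\<lambda>W. INF x\<in>W - {0}. ln (m2 x / m1 x)) ` {W. subspace W \<and> dim W = 1})"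
    proof (rule bdd_aboveI2)
      fix W assume "W \<in> {W. subspace W \<and> dim W = 1}"
      then have "\<bar>INF x\<in>W - {0}. ln (m2 x / m1 x)\<bar> \<le> K"
        using nonzero_in_positive_dim K by (intro abs_cINF_le) auto
      then show "(INF x\<in>W - {0}. ln (m2 x / m1 x)) \<le> K" by simp
    qed
  qed
  finally show ?thesis unfolding succ_min_def .
qed

lemma succ_min_dim_le_ln_div:
  assumes m1: "is_norm smul m1" and m2: "is_norm smul m2" and w: "w \<noteq> 0"
  shows "succ_min smul m1 m2 N \<le> ln (m2 w / m1 w)"
proof -
  obtain K where K: "\<And>x. x \<noteq> 0 \<Longrightarrow> \<bar>ln (m2 x / m1 x)\<bar> \<le> K"
    using is_norms_ln_div_bounded[OF m1 m2] by blast
  have "bdd_below ((\<lambda>x. ln (m2 x / m1 x)) ` (UNIV - {0}))"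
    using K by (intro bdd_belowI2[of _ "- K"]) (force simp: abs_le_iff)
  then have "(INF x\<in>UNIV - {0}. ln (m2 x / m1 x)) \<le> ln (m2 w / m1 w)"
    using w by (intro cINF_lower) auto
  then show ?thesis unfolding succ_min_def subspaces_dim_N by simp
qed

lemma abs_ln_div_le_dist_p_infinity:
  assumes m1: "is_norm smul m1" and m2: "is_norm smul m2" and w: "w \<noteq> 0"
  shows "\<bar>ln (m2 w / m1 w)\<bar> \<le> dist_p smul N \<infinity> m1 m2"
proof -
  have "1 \<le> N" using w eq_zero_if_coords_zero[of w] by (cases "N = 0") auto
  then have "\<bar>succ_min smul m1 m2 1\<bar> \<le> dist_p smul N \<infinity> m1 m2"
    "\<bar>succ_min smul m1 m2 N\<bar> \<le> dist_p smul N \<infinity> m1 m2"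
    by (auto simp: dist_p_def intro!: Max_ge)
  with ln_div_le_succ_min_one[OF assms] succ_min_dim_le_ln_div[OF assms] show ?thesis
    by linarith
qed

lemma hermitian_norm_orth_eq_coord_l2_norm:
  assumes "hermitian_norm_orth smul nrm N v"
  shows "nrm = coord_l2_norm (\<lambda>i. nrm (v i))"
proof
  fix w
  obtain h where h: "hermitian_form smul h" and nrm: "\<And>x. nrm x = sqrt (Re (h x x))"
    and orth: "\<forall>i<N. \<forall>j<N. i \<noteq> j \<longrightarrow> h (v i) (v j) = 0"
    using assms unfolding hermitian_norm_orth_def by blast
  have "Re (h w w) = (\<Sum>i<N. (cmod (\<gamma> w i))\<^sup>2 * Re (h (v i) (v i)))"
    using hermitian_pythagoras[OF h orth, of "\<gamma> w"] coord_expansion[of w] by simp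
  also have "\<dots> = (\<Sum>i<N. (cmod (\<gamma> w i))\<^sup>2 * (nrm (v i))\<^sup>2)"
    using hermitian_Re_nonneg[OF h] by (simp add: nrm)
  finally show "nrm w = coord_l2_norm (\<lambda>i. nrm (v i)) w"
    by (simp add: nrm coord_l2_norm_def L2_set_def power_mult_distrib)
qed

lemma iota_eq_coord_l2_norm: "iota smul N v nrm a = coord_l2_norm (\<lambda>i. nrm (v i) * exp (- a i))"
  by (simp add: fun_eq_iff iota_def coord_l2_norm_def L2_set_def power_mult_distrib)

lemma exp_le_na_norm:
  assumes "i < N" "\<gamma> u i \<noteq> 0"
  shows "exp (- a i) \<le> na_norm smul N v a u"
proof -
  have "u \<noteq> 0" using assms(2) coord_zero by auto
  then show ?thesis unfolding na_norm_def using assms by (auto intro!: Max_ge)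
qed

lemma na_norm_nonneg: "0 \<le> na_norm smul N v a u"
proof (cases "u = 0")
  case False
  then obtain i where "i < N" "\<gamma> u i \<noteq> 0" using eq_zero_if_coords_zero by blast
  then show ?thesis using exp_le_na_norm exp_ge_zero order_trans by blast
qed (simp add: na_norm_def)

lemma na_norm_scale_basis:
  assumes "i < N" "c \<noteq> 0"
  shows "na_norm smul N v a (smul c (v i)) = exp (- a i)"
proof -
  have coords: "\<gamma> (smul c (v i)) j = (if j = i then c else 0)" if "j < N" for j
    using coord_basis_vector[OF assms(1) that] by (simp add: coord_scale)
  then have "smul c (v i) \<noteq> 0" using assms coord_zero by force
  moreover have "{j. j < N \<and> \<gamma> (smul c (v i)) j \<noteq> 0} = {i}"
    using coords assms by (auto split: if_split_asm)
  ultimately show ?thesis unfolding na_norm_def by simp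
qed

lemma coord_l2_norm_exp_weight_le:
  assumes \<rho>: "\<And>i. i < N \<Longrightarrow> 0 \<le> \<rho> i"
  shows "coord_l2_norm (\<lambda>i. \<rho> i * exp (- a i)) u \<le> na_norm smul N v a u * coord_l2_norm \<rho> u"
  unfolding coord_l2_norm_def L2_set_right_distrib[OF na_norm_nonneg]
proof (rule L2_set_mono)
  fix i assume i: "i \<in> {..<N}"
  show "0 \<le> cmod (\<gamma> u i) * (\<rho> i * exp (- a i))" using \<rho> i by simp
  show "cmod (\<gamma> u i) * (\<rho> i * exp (- a i)) \<le> na_norm smul N v a u * (cmod (\<gamma> u i) * \<rho> i)"
  proof (cases "\<gamma> u i = 0")
    case False
    then have "exp (- a i) \<le> na_norm smul N v a u" using i exp_le_na_norm by blast
    then have "(cmod (\<gamma> u i) * \<rho> i) * exp (- a i) \<le> (cmod (\<gamma> u i) * \<rho> i) * na_norm smul N v a u"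
      using \<rho> i by (intro mult_left_mono) auto
    then show ?thesis by (simp add: mult_ac)
  qed simp
qed

lemma iota1_lower_bound:
  assumes \<rho>: "\<And>i. i < N \<Longrightarrow> 0 < \<rho> i"
    and c: "0 \<le> c" "\<And>u. c * coord_l2_norm \<rho> u \<le> n' u"
  shows "c * coord_l2_norm (\<lambda>i. \<rho> i * exp (- a i)) w \<le> iota1 smul N v n' a w"
  unfolding iota1_def
proof (rule cInf_greatest)
  let ?E = "coord_l2_norm (\<lambda>i. \<rho> i * exp (- a i))"
  show "{\<Sum>u\<leftarrow>ws. n' u * na_norm smul N v a u |ws. sum_list ws = w} \<noteq> {}"
    by (auto intro: exI[of _ "[w]"])
  fix x assume "x \<in> {\<Sum>u\<leftarrow>ws. n' u * na_norm smul N v a u |ws. sum_list ws = w}"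
  then obtain ws where ws: "sum_list ws = w" "x = (\<Sum>u\<leftarrow>ws. n' u * na_norm smul N v a u)"
    by blast
  have term_bound: "c * ?E u \<le> n' u * na_norm smul N v a u" for u
  proof -
    have "c * ?E u \<le> c * (na_norm smul N v a u * coord_l2_norm \<rho> u)"
      using coord_l2_norm_exp_weight_le[of \<rho>] \<rho> c(1) by (intro mult_left_mono) (auto simp: less_imp_le)
    also have "\<dots> = (c * coord_l2_norm \<rho> u) * na_norm smul N v a u" by simp
    also have "\<dots> \<le> n' u * na_norm smul N v a u"
      using c(2) na_norm_nonneg by (rule mult_right_mono)
    finally show ?thesis .
  qed
  have "?E w \<le> (\<Sum>u\<leftarrow>ws. ?E u)"
    using is_norm_sum_list_le[OF is_norm_coord_l2_norm, of "\<lambda>i. \<rho> i * exp (- a i)" ws] \<rho> ws(1)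
    by simp
  then have "c * ?E w \<le> c * (\<Sum>u\<leftarrow>ws. ?E u)"
    using c(1) by (rule mult_left_mono)
  also have "\<dots> = (\<Sum>u\<leftarrow>ws. c * ?E u)" by (simp add: sum_list_const_mult)
  also have "\<dots> \<le> x"
    unfolding ws(2) using term_bound by (rule sum_list_mono)
  finally show "c * ?E w \<le> x" .
qed

lemma iota1_upper_bound:
  assumes n': "is_norm smul n'"
    and C: "0 \<le> C" "\<And>i. i < N \<Longrightarrow> n' (v i) \<le> C * \<rho> i"
  shows "iota1 smul N v n' a w \<le> real N * C * coord_l2_norm (\<lambda>i. \<rho> i * exp (- a i)) w"
proof -
  let ?E = "coord_l2_norm (\<lambda>i. \<rho> i * exp (- a i))"
  let ?t = "\<lambda>u. n' u * na_norm smul N v a u"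
  define ws where "ws = map (\<lambda>i. smul (\<gamma> w i) (v i)) [0..<N]"
  have "sum_list ws = w"
    unfolding ws_def by (subst (2) coord_expansion) (simp add: sum_list_distinct_conv_sum_set atLeast0LessThan)
  then have "iota1 smul N v n' a w \<le> sum_list (map ?t ws)"
    unfolding iota1_def
    by (intro cInf_lower bdd_belowI[of _ 0])
      (auto intro!: sum_list_nonneg mult_nonneg_nonneg is_norm_nonneg[OF n'] na_norm_nonneg)
  also have "\<dots> = (\<Sum>i<N. ?t (smul (\<gamma> w i) (v i)))"
    by (simp add: ws_def sum_list_distinct_conv_sum_set atLeast0LessThan comp_def)
  also have "\<dots> \<le> (\<Sum>i<N. C * ?E w)"
  proof (rule sum_mono)
    fix i assume i: "i \<in> {..<N}"
    show "?t (smul (\<gamma> w i) (v i)) \<le> C * ?E w"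
    proof (cases "\<gamma> w i = 0")
      case True
      then show ?thesis
        using C(1) by (simp add: is_norm_zero[OF n'] coord_l2_norm_def)
    next
      case False
      then have "?t (smul (\<gamma> w i) (v i)) = cmod (\<gamma> w i) * n' (v i) * exp (- a i)"
        using i by (simp add: is_norm_scale[OF n'] na_norm_scale_basis)
      also have "\<dots> \<le> C * (cmod (\<gamma> w i) * (\<rho> i * exp (- a i)))"
      proof -
        have "n' (v i) * (cmod (\<gamma> w i) * exp (- a i)) \<le> C * \<rho> i * (cmod (\<gamma> w i) * exp (- a i))"
          using C(2) i by (intro mult_right_mono) auto
        then show ?thesis by (simp add: mult_ac)
      qed
      also have "\<dots> \<le> C * ?E w"
        using coord_le_coord_l2_norm[of i w "\<lambda>i. \<rho> i * exp (- a i)"] i C(1)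
        by (intro mult_left_mono) auto
      finally show ?thesis .
    qed
  qed
  finally show ?thesis by simp
qed

lemma abs_ln_iota1_div_le:
  assumes n': "is_norm smul n'" and \<rho>: "\<And>i. i < N \<Longrightarrow> 0 < \<rho> i"
    and bound: "\<And>u. u \<noteq> 0 \<Longrightarrow> \<bar>ln (n' u / coord_l2_norm \<rho> u)\<bar> \<le> D" and w: "w \<noteq> 0"
  shows "\<bar>ln (iota1 smul N v n' a w / coord_l2_norm (\<lambda>i. \<rho> i * exp (- a i)) w)\<bar> \<le> D + ln N"
proof -
  let ?E = "coord_l2_norm \<rho>" and ?Ea = "coord_l2_norm (\<lambda>i. \<rho> i * exp (- a i))"
  have E: "is_norm smul ?E" and Ea: "is_norm smul ?Ea"
    using \<rho> by (auto intro!: is_norm_coord_l2_norm)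
  have "exp (- D) * ?E u \<le> n' u \<and> n' u \<le> exp D * ?E u" if "u \<noteq> 0" for u
    using bound[OF that] abs_ln_div_le_iff is_norm_pos E n' that by blast
  then have lower: "exp (- D) * ?E u \<le> n' u" and upper: "n' u \<le> exp D * ?E u" for u
    by (cases "u = 0"; simp add: is_norm_zero[OF E] is_norm_zero[OF n'])+
  have "1 \<le> N" using w eq_zero_if_coords_zero[of w] by (cases "N = 0") auto
  have lo: "exp (- D) * ?Ea w \<le> iota1 smul N v n' a w"
    by (rule iota1_lower_bound[OF \<rho>]) (simp_all add: lower)
  have "n' (v i) \<le> exp D * \<rho> i" if "i < N" for i
    using upper[of "v i"] coord_l2_norm_basis_vector[of i \<rho>] that \<rho>[OF that] by simp
  then have hi: "iota1 smul N v n' a w \<le> real N * exp D * ?Ea w"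
    by (intro iota1_upper_bound[OF n']) auto
  have "0 < ?Ea w" using is_norm_pos[OF Ea w] .
  then have "0 < iota1 smul N v n' a w"
    using lo by (meson exp_gt_zero mult_pos_pos order_less_le_trans)
  moreover have "exp (- (D + ln N)) * ?Ea w \<le> exp (- D) * ?Ea w"
    using \<open>1 \<le> N\<close> \<open>0 < ?Ea w\<close> by (intro mult_right_mono) auto
  then have "exp (- (D + ln N)) * ?Ea w \<le> iota1 smul N v n' a w"
    using lo by linarith
  moreover have "iota1 smul N v n' a w \<le> exp (D + ln N) * ?Ea w"
    using hi \<open>1 \<le> N\<close> by (simp add: exp_add mult.commute)
  ultimately show ?thesis
    using abs_ln_div_le_iff \<open>0 < ?Ea w\<close> by blast
qed

end

lemma dist_p_le:
  assumes bound: "\<And>i. i \<in> {1..N} \<Longrightarrow> \<bar>succ_min smul m1 m2 i\<bar> \<le> C"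
    and "0 \<le> C" "1 \<le> N" "1 \<le> p"
  shows "dist_p smul N p m1 m2 \<le> C"
proof (cases "p = \<infinity>")
  case True
  then show ?thesis unfolding dist_p_def using assms by (auto intro!: Max.boundedI)
next
  case False
  then obtain r where r: "p = ereal r" "1 \<le> r" using \<open>1 \<le> p\<close> by (cases p) auto
  have "(\<Sum>i=1..N. \<bar>succ_min smul m1 m2 i\<bar> powr r) \<le> (\<Sum>i=1..N. C powr r)"
    by (rule sum_mono) (use bound r in \<open>auto intro!: powr_mono2\<close>)
  then have "(\<Sum>i=1..N. \<bar>succ_min smul m1 m2 i\<bar> powr r) / real N \<le> C powr r"
    using \<open>1 \<le> N\<close> by (simp add: field_simps)
  then have "((\<Sum>i=1..N. \<bar>succ_min smul m1 m2 i\<bar> powr r) / real N) powr (1 / r) \<le> (C powr r) powr (1 / r)"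
    using r by (intro powr_mono2) (auto intro!: divide_nonneg_nonneg sum_nonneg)
  also have "\<dots> = C" using r \<open>0 \<le> C\<close> by (simp add: powr_powr)
  finally show ?thesis using r False unfolding dist_p_def by simp
qed

theorem lemma3p1:
  fixes smul :: "complex \<Rightarrow> 'v::ab_group_add \<Rightarrow> 'v"
    and N :: nat and v :: "nat \<Rightarrow> 'v" and a :: "nat \<Rightarrow> real"
    and n n' :: "'v \<Rightarrow> real" and p :: ereal
  assumes "vector_space smul"
    and "1 \<le> N"
    and "is_basis smul N v"
    and "is_norm smul n" and "hermitian_norm_orth smul n N v"
    and "is_norm smul n'"
    and "1 \<le> p"
  shows "dist_p smul N p (iota smul N v n a) (iota1 smul N v n' a)
           \<le> dist_p smul N \<infinity> n n' + ln (real N)"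
proof -
  interpret coord_basis smul N v
    using assms(1,3) by (simp add: coord_basis_def coord_basis_axioms_def)
  define \<rho> where "\<rho> i = n (v i)" for i
  define D where "D = dist_p smul N \<infinity> n n'"
  have \<rho>: "\<And>i. i < N \<Longrightarrow> 0 < \<rho> i"
    unfolding \<rho>_def using is_norm_pos[OF assms(4)] basis_nonzero by blast
  have n: "n = coord_l2_norm \<rho>"
    unfolding \<rho>_def by (rule hermitian_norm_orth_eq_coord_l2_norm[OF assms(5)])
  have D: "\<And>u. u \<noteq> 0 \<Longrightarrow> \<bar>ln (n' u / n u)\<bar> \<le> D"
    unfolding D_def by (rule abs_ln_div_le_dist_p_infinity[OF assms(4,6)])
  then have "0 \<le> D" using basis_nonzero assms(2) by force
  have iota: "iota smul N v n a = coord_l2_norm (\<lambda>i. \<rho> i * exp (- a i))"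
    unfolding iota_eq_coord_l2_norm \<rho>_def ..
  have "\<bar>ln (iota1 smul N v n' a w / iota smul N v n a w)\<bar> \<le> D + ln N" if "w \<noteq> 0" for w
    unfolding iota using abs_ln_iota1_div_le[OF assms(6) \<rho> D[unfolded n] that] .
  then have "\<bar>succ_min smul (iota smul N v n a) (iota1 smul N v n' a) i\<bar> \<le> D + ln N"
    if "i \<in> {1..N}" for i
    using that by (intro abs_succ_min_le) auto
  moreover have "0 \<le> D + ln N" using \<open>0 \<le> D\<close> assms(2) by simp
  ultimately show ?thesis
    unfolding D_def using dist_p_le assms(2,7) by blast
qed

end
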